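(* Let $L$ be a Lelek fan, let $C\subseteq L$ be a subcontinuum of $L$ that is a Cantor fan, and let $f:L\to L$ be an embedding with $f(L)\subseteq C$. Then $f$ does not admit a retraction, i.e. there is no retraction from $L$ onto $f(L)$.
   Context: A continuum is a nonempty compact connected metric space. A dendroid is an arcwise connected, hereditarily unicoherent continuum. A point $x$ of a dendroid $X$ is a ramification point if $x$ is the top (the branch point) of some simple triod in $X$. A fan is a dendroid with at most one ramification point; this point, if it exists, is called the top of the fan. For a fan $X$, a point $x$ is an end point of $X$ if $x$ is an end point of every arc in $X$ containing $x$; $E(X)$ denotes the set of end points of $X$. A fan $X$ with top $v$ is smooth if for every $x\in X$ and every sequence $x_n\to x$ in $X$, the arcs from $v$ to $x_n$ converge (in the Hausdorff metric) to the arc from $v$ to $x$. A Lelek fan is a smooth fan $X$ with $\mathrm{Cl}(E(X))=X$. A Cantor fan is a continuum homeomorphic to $\bigcup_{c\in C}A_c\subseteq\mathbb R^2$, where $C\subseteq[0,1]$ is the Cantor middle-third set and $A_c$ is the straight segment from $(\tfrac12,0)$ to $(c,1)$. An embedding is a continuous map that is a homeomorphism onto its image. A retraction from a space $X$ onto a subspace $Y$ is a continuous map $r:X\to Y$ with $r(y)=y$ for all $y\in Y$; an embedding $f:X\to Z$ admits a retraction if there is a retraction from $Z$ onto $f(X)$. *)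

theory Defs
  imports "HOL-Analysis.Analysis"
begin

definition continuum :: "'a::metric_space set \<Rightarrow> bool" where
  "continuum X \<longleftrightarrow> X \<noteq> {} \<and> compact X \<and> connected X"

definition arc_in :: "'a::metric_space set \<Rightarrow> (real \<Rightarrow> 'a) \<Rightarrow> bool" where
  "arc_in X g \<longleftrightarrow> arc g \<and> path_image g \<subseteq> X"

definition arcwise_connected :: "'a::metric_space set \<Rightarrow> bool" where
  "arcwise_connected X \<longleftrightarrow>
     (\<forall>a\<in>X. \<forall>b\<in>X. a \<noteq> b \<longrightarrow>
        (\<exists>g. arc_in X g \<and> pathstart g = a \<and> pathfinish g = b))"

definition hereditarily_unicoherent :: "'a::metric_space set \<Rightarrow> bool" where
  "hereditarily_unicoherent X \<longleftrightarrow>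
     (\<forall>A B. A \<subseteq> X \<longrightarrow> B \<subseteq> X \<longrightarrow> continuum A \<longrightarrow> continuum B \<longrightarrow> connected (A \<inter> B))"

definition dendroid :: "'a::metric_space set \<Rightarrow> bool" where
  "dendroid X \<longleftrightarrow> continuum X \<and> arcwise_connected X \<and> hereditarily_unicoherent X"

definition ramification_point :: "'a::metric_space set \<Rightarrow> 'a \<Rightarrow> bool" where
  "ramification_point X x \<longleftrightarrow>
     (\<exists>g1 g2 g3. arc_in X g1 \<and> arc_in X g2 \<and> arc_in X g3 \<and>
        pathstart g1 = x \<and> pathstart g2 = x \<and> pathstart g3 = x \<and>
        path_image g1 \<inter> path_image g2 = {x} \<and>
        path_image g1 \<inter> path_image g3 = {x} \<and>
        path_image g2 \<inter> path_image g3 = {x})"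

definition fan :: "'a::metric_space set \<Rightarrow> bool" where
  "fan X \<longleftrightarrow> dendroid X \<and>
     (\<forall>x y. ramification_point X x \<longrightarrow> ramification_point X y \<longrightarrow> x = y)"

definition fan_top :: "'a::metric_space set \<Rightarrow> 'a \<Rightarrow> bool" where
  "fan_top X v \<longleftrightarrow> fan X \<and> v \<in> X \<and> ramification_point X v"

definition end_points :: "'a::metric_space set \<Rightarrow> 'a set" where
  "end_points X = {x \<in> X. \<forall>g. arc_in X g \<and> x \<in> path_image g \<longrightarrow>
                                   x = pathstart g \<or> x = pathfinish g}"

text \<open>The arc from a to b in X (unique in a dendroid); degenerate {a} when a = b.\<close>
definition arc_between :: "'a::metric_space set \<Rightarrow> 'a \<Rightarrow> 'a \<Rightarrow> 'a set" where
  "arc_between X a b =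
     (if a = b then {a}
      else (THE A. \<exists>g. arc_in X g \<and> pathstart g = a \<and> pathfinish g = b \<and> path_image g = A))"

definition hausdorff_dist :: "'a::metric_space set \<Rightarrow> 'a set \<Rightarrow> real" where
  "hausdorff_dist A B = max (SUP a\<in>A. infdist a B) (SUP b\<in>B. infdist b A)"

definition smooth_fan :: "'a::metric_space set \<Rightarrow> 'a \<Rightarrow> bool" where
  "smooth_fan X v \<longleftrightarrow> fan_top X v \<and>
     (\<forall>x\<in>X. \<forall>s::nat \<Rightarrow> 'a. (\<forall>n. s n \<in> X) \<and> s \<longlonglongrightarrow> x \<longrightarrow>
        (\<lambda>n. hausdorff_dist (arc_between X v (s n)) (arc_between X v x)) \<longlonglongrightarrow> 0)"

definition lelek_fan :: "'a::metric_space set \<Rightarrow> bool" where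
  "lelek_fan X \<longleftrightarrow> (\<exists>v. smooth_fan X v) \<and> closure (end_points X) = X"

primrec cantor_stage :: "nat \<Rightarrow> real set" where
  "cantor_stage 0 = {0..1}"
| "cantor_stage (Suc n) = (\<lambda>x. x / 3) ` cantor_stage n \<union> (\<lambda>x. 2/3 + x / 3) ` cantor_stage n"

definition cantor_set :: "real set" where
  "cantor_set = (\<Inter>n. cantor_stage n)"

definition cantor_fan_model :: "(real \<times> real) set" where
  "cantor_fan_model = (\<Union>c\<in>cantor_set. closed_segment (1/2, 0) (c, 1))"

definition cantor_fan :: "'a::metric_space set \<Rightarrow> bool" where
  "cantor_fan X \<longleftrightarrow> X homeomorphic cantor_fan_model"

definition embedding_on :: "'a::metric_space set \<Rightarrow> ('a \<Rightarrow> 'b::metric_space) \<Rightarrow> bool" where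
  "embedding_on X f \<longleftrightarrow> (\<exists>g. homeomorphism X (f ` X) f g)"

end

theory Submission imports Defs begin

text \<open>Transport everything into the planar model of the Cantor fan: the image Y of L is a retract
  of the model and homeomorphic to L, so its end points are dense and, as L has a ramification
  point, it contains a nondegenerate connected set missing the vertex. Since the Cantor set contains
  no interval, such a set lies in one leg and contains a segment of it. An end point y of Y near the
  middle of that segment lies on a nearby leg; by uniform continuity the retraction moves the piece
  of that leg around y only slightly, so its image, again confined to one leg, is a segment of Y
  around y, and y is no end point after all.\<close>

lemma cantor_stage_subset: "cantor_stage n \<subseteq> {0..1}"
  by (induction n) auto

lemma cantor_stage_interval_length:
  "{a..b} \<subseteq> cantor_stage n \<Longrightarrow> b - a \<le> (1/3::real)^n"
proof (induction n arbitrary: a b)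
  case 0
  then show ?case by (cases "a \<le> b") auto
next
  case (Suc n)
  let ?A = "cantor_stage n"
  have sub: "{a..b} \<subseteq> (\<lambda>x. x / 3) ` ?A \<union> (\<lambda>x. 2/3 + x / 3) ` ?A" using Suc.prems by simp
  have "?A \<subseteq> {0..1}" by (rule cantor_stage_subset)
  then have lo: "z \<le> 1/3" if "z \<in> (\<lambda>x. x / 3) ` ?A" for z using that by auto
  have hi: "z \<ge> 2/3" if "z \<in> (\<lambda>x. 2/3 + x / 3) ` ?A" for z using that \<open>?A \<subseteq> {0..1}\<close> by auto
  consider "b < a" | "a \<le> b" "b < 1/2" | "a \<le> b" "a > 1/2" | "a \<le> 1/2" "1/2 \<le> b" by linarith
  then show ?case
  proof cases
    case 1
    have "(0::real) \<le> (1/3)^Suc n" by simp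
    with 1 show ?thesis by linarith
  next
    case 2
    have "{3*a..3*b} \<subseteq> ?A"
    proof
      fix z assume z: "z \<in> {3*a..3*b}"
      then have "z/3 \<in> {a..b}" by auto
      then have "z/3 \<in> (\<lambda>x. x / 3) ` ?A \<union> (\<lambda>x. 2/3 + x / 3) ` ?A" using sub by blast
      moreover have "z/3 \<notin> (\<lambda>x. 2/3 + x / 3) ` ?A" using hi[of "z/3"] z 2 by auto
      ultimately show "z \<in> ?A" by auto
    qed
    from Suc.IH[OF this] show ?thesis by simp
  next
    case 3
    have "{3*a-2..3*b-2} \<subseteq> ?A"
    proof
      fix z assume z: "z \<in> {3*a-2..3*b-2}"
      then have "2/3 + z/3 \<in> {a..b}" by auto
      then have "2/3 + z/3 \<in> (\<lambda>x. x / 3) ` ?A \<union> (\<lambda>x. 2/3 + x / 3) ` ?A" using sub by blast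
      moreover have "2/3 + z/3 \<notin> (\<lambda>x. x / 3) ` ?A" using lo[of "2/3 + z/3"] z 3 by auto
      ultimately show "z \<in> ?A" by auto
    qed
    from Suc.IH[OF this] show ?thesis by simp
  next
    case 4
    then have "1/2 \<in> {a..b}" by auto
    then have "1/2 \<in> (\<lambda>x. x / 3) ` ?A \<union> (\<lambda>x. 2/3 + x / 3) ` ?A" using sub by blast
    then show ?thesis using lo[of "1/2"] hi[of "1/2"] by force
  qed
qed

lemma cantor_set_no_interval:
  assumes "a < b" shows "\<not> {a..b} \<subseteq> cantor_set"
proof
  assume "{a..b} \<subseteq> cantor_set"
  obtain n where n: "(1/3::real)^n < b - a"
    using real_arch_pow_inv[of "b - a" "1/3"] assms by auto
  have "{a..b} \<subseteq> cantor_stage n" using \<open>{a..b} \<subseteq> cantor_set\<close> by (auto simp: cantor_set_def)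
  with cantor_stage_interval_length n show False by fastforce
qed

lemma connected_subset_cantor_set:
  assumes "connected S" "S \<subseteq> cantor_set" "x \<in> S" "y \<in> S"
  shows "x = y"
proof (rule ccontr)
  assume "x \<noteq> y"
  then have "min x y < max x y" by linarith
  moreover have "{min x y..max x y} \<subseteq> S"
    using assms connected_contains_Icc by (metis min_def max_def)
  ultimately show False using cantor_set_no_interval assms(2) by blast
qed

lemma compact_cantor_stage: "compact (cantor_stage n)"
  by (induction n) (auto intro!: compact_Un compact_continuous_image continuous_intros)

lemma compact_cantor_set: "compact cantor_set"
  unfolding cantor_set_def using compact_cantor_stage by (intro compact_Inter) auto

text \<open>fan_point c t is the point at height t on the segment from the vertex (1/2, 0) to (c, 1);
  fan_leg recovers c from a point of positive height and is junk at the vertex.\<close>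

definition fan_point :: "real \<Rightarrow> real \<Rightarrow> real \<times> real" where
  "fan_point c t = ((1 - t)/2 + t * c, t)"

definition fan_leg :: "real \<times> real \<Rightarrow> real" where
  "fan_leg x = 1/2 + (fst x - 1/2) / snd x"

lemma snd_fan_point [simp]: "snd (fan_point c t) = t"
  by (simp add: fan_point_def)

lemma fan_leg_fan_point [simp]: "t \<noteq> 0 \<Longrightarrow> fan_leg (fan_point c t) = c"
  by (simp add: fan_leg_def fan_point_def field_simps)

lemma continuous_on_fan_point [continuous_intros]:
  "continuous_on S (\<lambda>p. fan_point (fst p) (snd p))"
  unfolding fan_point_def by (intro continuous_intros) auto

lemma cantor_fan_model_eq:
  "cantor_fan_model = (\<lambda>p. fan_point (fst p) (snd p)) ` (cantor_set \<times> {0..1})"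
proof -
  have "closed_segment (1/2, 0) (c, 1) = fan_point c ` {0..1}" for c
    unfolding closed_segment_def fan_point_def by (auto simp: algebra_simps)
  then show ?thesis unfolding cantor_fan_model_def by (force simp: image_iff)
qed

lemma compact_cantor_fan_model: "compact cantor_fan_model"
  unfolding cantor_fan_model_eq
  by (intro compact_continuous_image compact_Times compact_cantor_set continuous_intros) auto

lemma fan_point_in_cantor_fan_model:
  "c \<in> cantor_set \<Longrightarrow> t \<in> {0..1} \<Longrightarrow> fan_point c t \<in> cantor_fan_model"
  unfolding cantor_fan_model_eq by force

lemma cantor_fan_model_point:
  assumes "x \<in> cantor_fan_model" "x \<noteq> (1/2, 0)"
  shows "fan_leg x \<in> cantor_set" "0 < snd x" "snd x \<le> 1" "x = fan_point (fan_leg x) (snd x)"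
proof -
  obtain c t where c: "c \<in> cantor_set" "t \<in> {0..1}" "x = fan_point c t"
    using assms(1) unfolding cantor_fan_model_eq by auto
  have "t \<noteq> 0" using c(3) assms(2) by (auto simp: fan_point_def)
  with c show "fan_leg x \<in> cantor_set" "0 < snd x" "snd x \<le> 1" "x = fan_point (fan_leg x) (snd x)"
    by auto
qed

lemma dist_fan_point_le:
  assumes "t \<in> {0..1}" shows "dist (fan_point c t) (fan_point c' t) \<le> \<bar>c - c'\<bar>"
proof -
  have "dist (fan_point c t) (fan_point c' t) = t * \<bar>c - c'\<bar>"
    using assms by (simp add: fan_point_def dist_Pair_Pair dist_real_def abs_mult
        flip: right_diff_distrib)
  also have "\<dots> \<le> \<bar>c - c'\<bar>" using assms by (simp add: mult_left_le_one_le)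
  finally show ?thesis .
qed

lemma fan_point_approx:
  assumes "0 < t" "0 < \<epsilon>"
  obtains \<mu> where "0 < \<mu>"
    "\<And>y. dist y (fan_point c t) < \<mu> \<Longrightarrow> \<bar>fan_leg y - c\<bar> < \<epsilon> \<and> \<bar>snd y - t\<bar> < \<epsilon>"
proof -
  have "continuous (at (fan_point c t)) fan_leg"
    unfolding fan_leg_def using assms(1) by (intro continuous_intros) auto
  then obtain \<mu> where "0 < \<mu>" and \<mu>: "\<And>y. dist y (fan_point c t) < \<mu> \<Longrightarrow>
      dist (fan_leg y) (fan_leg (fan_point c t)) < \<epsilon>"
    unfolding continuous_at_eps_delta using assms(2) by metis
  show thesis
  proof (rule that[of "min \<mu> \<epsilon>"])
    fix y assume y: "dist y (fan_point c t) < min \<mu> \<epsilon>"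
    then show "\<bar>fan_leg y - c\<bar> < \<epsilon> \<and> \<bar>snd y - t\<bar> < \<epsilon>"
      using \<mu>[of y] dist_snd_le[of y "fan_point c t"] assms(1)
      by (simp add: dist_real_def)
  qed (use \<open>0 < \<mu>\<close> assms in auto)
qed

lemma fan_leg_constant_on_connected:
  assumes "connected S" "S \<subseteq> cantor_fan_model" "(1/2, 0) \<notin> S" "x \<in> S" "y \<in> S"
  shows "fan_leg y = fan_leg x"
proof (rule connected_subset_cantor_set)
  have "continuous_on S fan_leg"
    unfolding fan_leg_def using assms(2,3) cantor_fan_model_point(2)
    by (intro continuous_intros) fastforce
  then show "connected (fan_leg ` S)" using assms(1) connected_continuous_image by blast
  show "fan_leg ` S \<subseteq> cantor_set" using assms(2,3) cantor_fan_model_point(1) by blast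
qed (use assms in auto)

lemma connected_in_cantor_fan_model_leg_segment:
  assumes "connected S" "S \<subseteq> cantor_fan_model" "(1/2, 0) \<notin> S" "x \<in> S" "y \<in> S"
    and "t \<in> {snd x..snd y}"
  shows "fan_point (fan_leg x) t \<in> S"
proof -
  have "connected (snd ` S)" using assms(1) by (intro connected_continuous_image continuous_intros)
  then have "{snd x..snd y} \<subseteq> snd ` S" using assms(4,5) connected_contains_Icc by blast
  then obtain z where z: "z \<in> S" "snd z = t" using assms(6) by auto
  then have "z = fan_point (fan_leg z) t" using assms(2,3) cantor_fan_model_point(4) by blast
  with z(1) show ?thesis using fan_leg_constant_on_connected[OF assms(1-4) z(1)] by simp
qed

lemma connected_in_cantor_fan_model_contains_segment:
  assumes "connected S" "S \<subseteq> cantor_fan_model" "(1/2, 0) \<notin> S" "x \<in> S" "y \<in> S" "x \<noteq> y"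
  obtains c \<alpha> \<beta> where "c \<in> cantor_set" "0 < \<alpha>" "\<alpha> < \<beta>" "\<beta> \<le> 1"
    "\<And>t. t \<in> {\<alpha>..\<beta>} \<Longrightarrow> fan_point c t \<in> S"
proof -
  have x: "fan_leg x \<in> cantor_set" "0 < snd x" "snd x \<le> 1" "x = fan_point (fan_leg x) (snd x)"
   and y: "fan_leg y \<in> cantor_set" "0 < snd y" "snd y \<le> 1" "y = fan_point (fan_leg y) (snd y)"
    using assms(2-5) cantor_fan_model_point by blast+
  have "fan_leg y = fan_leg x" using fan_leg_constant_on_connected assms(1-5) by blast
  with x(4) y(4) assms(6) have "snd x \<noteq> snd y" by metis
  then consider "snd x < snd y" | "snd y < snd x" by linarith
  then show thesis
  proof cases
    case 1
    with x y show thesis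
      using that connected_in_cantor_fan_model_leg_segment[OF assms(1-5)] by blast
  next
    case 2
    with x y \<open>fan_leg y = fan_leg x\<close> show thesis
      using that connected_in_cantor_fan_model_leg_segment[OF assms(1-3,5,4)] by metis
  qed
qed

lemma linepath_fan_point: "linepath (fan_point c a) (fan_point c b) = fan_point c \<circ> linepath a b"
  by (simp add: fun_eq_iff linepath_def fan_point_def field_simps)

lemma fan_point_not_end_point:
  assumes "a < t" "t < b" "\<And>s. s \<in> {a..b} \<Longrightarrow> fan_point c s \<in> Y"
  shows "fan_point c t \<notin> end_points Y"
proof
  define g where "g = linepath (fan_point c a) (fan_point c b)"
  have "fan_point c a \<noteq> fan_point c b" using assms(1,2) by (metis less_irrefl less_trans snd_fan_point)
  then have "arc g" by (simp add: g_def)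
  moreover have image_g: "path_image g = fan_point c ` {a..b}"
    using assms(1,2) by (simp add: g_def linepath_fan_point path_image_compose closed_segment_eq_real_ivl)
  ultimately have "arc_in Y g" using assms(3) by (auto simp: arc_in_def)
  moreover have "fan_point c t \<in> path_image g" using image_g assms(1,2) by auto
  moreover have "fan_point c t \<noteq> pathstart g" "fan_point c t \<noteq> pathfinish g"
    using assms(1,2) by (metis g_def less_irrefl pathstart_linepath pathfinish_linepath snd_fan_point)+
  moreover assume "fan_point c t \<in> end_points Y"
  ultimately show False unfolding end_points_def by blast
qed

lemma retraction_small_height_change_not_end_point:
  assumes \<rho>: "retraction cantor_fan_model Y \<rho>"
    and c: "c \<in> cantor_set" and y: "fan_point c t \<in> Y"
    and s: "0 < \<eta>" "\<eta> \<le> s" "s + \<eta> \<le> t" "t + \<eta> \<le> p" "p \<le> 1"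
    and moves: "\<And>u. u \<in> {s..p} \<Longrightarrow> \<bar>snd (\<rho> (fan_point c u)) - u\<bar> < \<eta>"
  shows "fan_point c t \<notin> end_points Y"
proof -
  let ?M = cantor_fan_model
  define R where "R = \<rho> ` fan_point c ` {s..p}"
  have segM: "fan_point c ` {s..p} \<subseteq> ?M" using s c fan_point_in_cantor_fan_model by auto
  have "connected (fan_point c ` {s..p})"
    unfolding fan_point_def by (intro connected_continuous_image continuous_intros) auto
  then have "connected R"
    unfolding R_def using \<rho> segM by (metis connected_continuous_image continuous_on_subset retraction)
  moreover have RY: "R \<subseteq> Y" using \<rho> segM unfolding R_def retraction by (metis image_mono)
  moreover have "R \<subseteq> ?M" using RY \<rho> by (auto simp: retraction_def)
  moreover have "(1/2, 0) \<notin> R"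
  proof
    assume "(1/2, 0) \<in> R"
    then obtain u where "u \<in> {s..p}" "\<rho> (fan_point c u) = (1/2, 0)" by (auto simp: R_def)
    with moves[of u] s show False by auto
  qed
  moreover have yR: "fan_point c t \<in> R"
    using \<rho> y s by (force simp: R_def retraction_def)
  moreover have "\<rho> (fan_point c s) \<in> R" "\<rho> (fan_point c p) \<in> R"
    using s by (auto simp: R_def)
  ultimately have seg: "fan_point (fan_leg (\<rho> (fan_point c s))) u \<in> R"
    if "u \<in> {snd (\<rho> (fan_point c s))..snd (\<rho> (fan_point c p))}" for u
    using connected_in_cantor_fan_model_leg_segment that by blast
  have "fan_leg (\<rho> (fan_point c s)) = fan_leg (fan_point c t)"
    using fan_leg_constant_on_connected \<open>connected R\<close> \<open>R \<subseteq> ?M\<close> \<open>(1/2, 0) \<notin> R\<close> yR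
      \<open>\<rho> (fan_point c s) \<in> R\<close> by blast
  also have "\<dots> = c" using s by simp
  finally have "fan_point c u \<in> Y" if "u \<in> {snd (\<rho> (fan_point c s))..snd (\<rho> (fan_point c p))}" for u
    using seg[OF that] RY by auto
  moreover have "snd (\<rho> (fan_point c s)) < t" "t < snd (\<rho> (fan_point c p))"
    using moves[of s] moves[of p] s by auto
  ultimately show ?thesis using fan_point_not_end_point by blast
qed

lemma retraction_moves_nearby_leg_little:
  assumes \<rho>: "retraction cantor_fan_model Y \<rho>" and "0 < \<eta>"
    and seg: "\<And>t. t \<in> {\<alpha>..\<beta>} \<Longrightarrow> fan_point c0 t \<in> Y" and "0 \<le> \<alpha>" "\<beta> \<le> 1"
  obtains \<delta> where "0 < \<delta>" "\<And>c u. c \<in> cantor_set \<Longrightarrow> \<bar>c - c0\<bar> < \<delta> \<Longrightarrow> u \<in> {\<alpha>..\<beta>} \<Longrightarrow>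
      \<bar>snd (\<rho> (fan_point c u)) - u\<bar> < \<eta>"
proof -
  let ?M = cantor_fan_model
  have "uniformly_continuous_on ?M \<rho>"
    using \<rho> compact_cantor_fan_model compact_uniformly_continuous by (auto simp: retraction_def)
  then obtain \<delta> where "0 < \<delta>" and \<delta>: "\<And>x x'. x \<in> ?M \<Longrightarrow> x' \<in> ?M \<Longrightarrow> dist x' x < \<delta> \<Longrightarrow>
      dist (\<rho> x') (\<rho> x) < \<eta>"
    unfolding uniformly_continuous_on_def using \<open>0 < \<eta>\<close> by metis
  have "\<bar>snd (\<rho> (fan_point c u)) - u\<bar> < \<eta>"
    if c: "c \<in> cantor_set" "\<bar>c - c0\<bar> < \<delta>" and u: "u \<in> {\<alpha>..\<beta>}" for c u
  proof -
    have u01: "u \<in> {0..1}" using u assms(4,5) by auto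
    have "dist (fan_point c u) (fan_point c0 u) < \<delta>"
      using dist_fan_point_le[OF u01, of c c0] c(2) by linarith
    moreover have "fan_point c u \<in> ?M" "fan_point c0 u \<in> ?M"
      using seg[OF u] u01 c(1) \<rho> fan_point_in_cantor_fan_model by (auto simp: retraction_def)
    ultimately have "dist (\<rho> (fan_point c u)) (\<rho> (fan_point c0 u)) < \<eta>" using \<delta> by blast
    moreover have "\<rho> (fan_point c0 u) = fan_point c0 u" using \<rho> seg[OF u] by (simp add: retraction_def)
    ultimately show ?thesis
      using dist_snd_le[of "\<rho> (fan_point c u)" "fan_point c0 u"] by (simp add: dist_real_def)
  qed
  with \<open>0 < \<delta>\<close> show thesis using that by blast
qed

lemma cantor_fan_retract_no_leg_segment:
  assumes \<rho>: "retraction cantor_fan_model Y \<rho>" and dense: "Y \<subseteq> closure (end_points Y)"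
    and c0: "c0 \<in> cantor_set" and ab: "0 < \<alpha>" "\<alpha> < \<beta>" "\<beta> \<le> 1"
    and seg: "\<And>t. t \<in> {\<alpha>..\<beta>} \<Longrightarrow> fan_point c0 t \<in> Y"
  shows False
proof -
  define gap where "gap = (\<beta> - \<alpha>) / 4"
  define tq where "tq = \<alpha> + 2 * gap"
  define \<eta> where "\<eta> = min (gap / 2) (\<alpha> / 2)"
  have gap: "0 < gap" "\<alpha> + 4 * gap = \<beta>" using ab by (simp_all add: gap_def field_simps)
  have \<eta>: "0 < \<eta>" "\<eta> \<le> gap / 2" "\<eta> \<le> \<alpha> / 2" using gap ab by (auto simp: \<eta>_def)
  obtain \<delta> where "0 < \<delta>" and \<delta>: "\<And>c u. c \<in> cantor_set \<Longrightarrow> \<bar>c - c0\<bar> < \<delta> \<Longrightarrow> u \<in> {\<alpha>..\<beta>} \<Longrightarrow>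
      \<bar>snd (\<rho> (fan_point c u)) - u\<bar> < \<eta>"
    by (rule retraction_moves_nearby_leg_little[of Y \<rho> \<eta> \<alpha> \<beta> c0, OF \<rho> \<eta>(1)])
      (use seg ab in auto)
  obtain \<mu> where "0 < \<mu>" and \<mu>: "\<And>y. dist y (fan_point c0 tq) < \<mu> \<Longrightarrow>
      \<bar>fan_leg y - c0\<bar> < min \<delta> (gap / 2) \<and> \<bar>snd y - tq\<bar> < min \<delta> (gap / 2)"
    using fan_point_approx[of tq "min \<delta> (gap / 2)" c0] ab gap \<open>0 < \<delta>\<close> by (auto simp: tq_def)
  have "fan_point c0 tq \<in> closure (end_points Y)" using seg dense gap by (auto simp: tq_def)
  then obtain y where y: "y \<in> end_points Y" "dist y (fan_point c0 tq) < \<mu>"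
    using \<open>0 < \<mu>\<close> closure_approachable by metis
  define c where "c = fan_leg y"
  have yY: "y \<in> Y" using y(1) by (simp add: end_points_def)
  have cc0: "\<bar>c - c0\<bar> < \<delta>" and "\<bar>snd y - tq\<bar> < gap / 2" using \<mu>[OF y(2)] by (auto simp: c_def)
  then have ty: "tq - gap / 2 < snd y" "snd y < tq + gap / 2" by arith+
  have "y \<noteq> (1/2, 0)" using ty ab gap by (auto simp: tq_def)
  moreover have "y \<in> cantor_fan_model" using yY \<rho> by (auto simp: retraction_def)
  ultimately have c: "c \<in> cantor_set" and yc: "y = fan_point c (snd y)"
    using cantor_fan_model_point unfolding c_def by blast+
  have "\<bar>snd (\<rho> (fan_point c u)) - u\<bar> < \<eta>" if "u \<in> {tq - gap..tq + gap}" for u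
    using \<delta>[OF c cc0] that gap by (auto simp: tq_def)
  moreover have "\<eta> \<le> tq - gap" "tq - gap + \<eta> \<le> snd y" "snd y + \<eta> \<le> tq + gap" "tq + gap \<le> 1"
    using \<eta> ty ab gap by (auto simp: tq_def)
  moreover have "fan_point c (snd y) \<in> Y" using yY yc by simp
  ultimately have "fan_point c (snd y) \<notin> end_points Y"
    using retraction_small_height_change_not_end_point[OF \<rho> c _ \<eta>(1)] by blast
  with y(1) yc show False by simp
qed

lemma arc_in_homeomorphism:
  assumes "homeomorphism X Y \<phi> \<psi>" "arc_in Y g"
  shows "arc_in X (\<psi> \<circ> g)"
proof -
  have gY: "path_image g \<subseteq> Y" and "arc g" using assms(2) by (auto simp: arc_in_def)
  have "path (\<psi> \<circ> g)"
    using \<open>arc g\<close> gY assms(1) by (metis arc_imp_path continuous_on_subset homeomorphism_def path_continuous_image)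
  moreover have "inj_on (\<psi> \<circ> g) {0..1}"
  proof (rule comp_inj_on)
    show "inj_on g {0..1}" using \<open>arc g\<close> by (rule arc_imp_inj_on)
    show "inj_on \<psi> (g ` {0..1})"
      using assms(1) gY unfolding homeomorphism_def path_image_def by (metis inj_on_inverseI subsetD)
  qed
  moreover have "path_image (\<psi> \<circ> g) \<subseteq> X"
    using gY assms(1) by (auto simp: path_image_compose homeomorphism_def)
  ultimately show ?thesis by (simp add: arc_in_def arc_def)
qed

lemma homeomorphism_end_points:
  assumes hom: "homeomorphism X Y \<phi> \<psi>"
  shows "\<phi> ` end_points X \<subseteq> end_points Y"
proof clarify
  fix e assume e: "e \<in> end_points X"
  then have eX: "e \<in> X" by (simp add: end_points_def)
  have "\<phi> e = pathstart g \<or> \<phi> e = pathfinish g" if g: "arc_in Y g" "\<phi> e \<in> path_image g" for g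
  proof -
    have "arc_in X (\<psi> \<circ> g)" using arc_in_homeomorphism[OF hom g(1)] .
    moreover have "e \<in> path_image (\<psi> \<circ> g)"
      using g(2) eX hom by (metis homeomorphism_apply1 image_eqI path_image_compose)
    ultimately have "e = \<psi> (pathstart g) \<or> e = \<psi> (pathfinish g)"
      using e by (auto simp: end_points_def pathstart_compose pathfinish_compose)
    moreover have "pathstart g \<in> Y" "pathfinish g \<in> Y"
      using g(1) by (auto simp: arc_in_def)
    ultimately show ?thesis using hom by (metis homeomorphism_apply2)
  qed
  moreover have "\<phi> e \<in> Y" using eX hom by (auto simp: homeomorphism_def)
  ultimately show "\<phi> e \<in> end_points Y" by (simp add: end_points_def)
qed

lemma homeomorphism_dense_end_points:
  assumes hom: "homeomorphism X Y \<phi> \<psi>" and dense: "closure (end_points X) = X"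
  shows "Y \<subseteq> closure (end_points Y)"
proof -
  have "Y = \<phi> ` closure (end_points X)" using hom dense by (simp add: homeomorphism_def)
  also have "\<dots> \<subseteq> closure (\<phi> ` end_points X)"
    using hom dense by (intro continuous_image_closure_subset) (auto simp: homeomorphism_def)
  also have "\<dots> \<subseteq> closure (end_points Y)"
    using homeomorphism_end_points[OF hom] by (rule closure_mono)
  finally show ?thesis .
qed

lemma retraction_homeomorphism:
  assumes hom: "homeomorphism S S' h h'" and r: "retraction S T r"
  shows "retraction S' (h ` T) (h \<circ> r \<circ> h')"
proof -
  have "continuous_on S' (h \<circ> r \<circ> h')"
    using hom r unfolding homeomorphism_def retraction_def
    by (metis continuous_on_compose continuous_on_subset image_subset_iff_funcset)
  with hom r show ?thesis
    unfolding retraction_def homeomorphism_def by (auto simp: subset_iff image_iff)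
qed

text \<open>Two arcs of a simple triod meet only in its top, so one of them misses p away from the top.\<close>

lemma ramification_point_arc_avoiding:
  assumes "ramification_point X v"
  obtains g where "arc_in X g" "p \<notin> g ` {1/2..1}"
proof -
  obtain g1 g2 where g: "arc_in X g1" "arc_in X g2" "pathstart g1 = v" "pathstart g2 = v"
      "path_image g1 \<inter> path_image g2 = {v}"
    using assms unfolding ramification_point_def by blast
  have "p \<notin> g1 ` {1/2..1} \<or> p \<notin> g2 ` {1/2..1}"
  proof (rule ccontr)
    assume "\<not> ?thesis"
    then obtain t1 t2 where t: "t1 \<in> {1/2..1}" "t2 \<in> {1/2..1}" "p = g1 t1" "p = g2 t2" by auto
    then have "t1 \<in> {0..1}" "t2 \<in> {0..1}" by auto
    then have "p \<in> g1 ` {0..1}" "p \<in> g2 ` {0..1}" using t(3,4) by blast+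
    then have "p \<in> path_image g1 \<inter> path_image g2" by (simp add: path_image_def)
    then have "g1 t1 = g1 0" using g(3,5) t(3) by (simp add: pathstart_def)
    moreover have "inj_on g1 {0..1}" using g(1) by (simp add: arc_in_def arc_imp_inj_on)
    ultimately show False using t(1) by (auto dest: inj_onD)
  qed
  then show thesis using g(1,2) that by blast
qed

lemma homeomorphic_ramified_subset_contains_leg_segment:
  assumes \<phi>: "homeomorphism X Y \<phi> \<psi>" and "ramification_point X v" and YM: "Y \<subseteq> cantor_fan_model"
  obtains c \<alpha> \<beta> where "c \<in> cantor_set" "0 < \<alpha>" "\<alpha> < \<beta>" "\<beta> \<le> 1"
    "\<And>t. t \<in> {\<alpha>..\<beta>} \<Longrightarrow> fan_point c t \<in> Y"
proof -
  obtain g where g: "arc_in X g" "\<psi> (1/2, 0) \<notin> g ` {1/2..1}"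
    using assms(2) by (rule ramification_point_arc_avoiding)
  define Q where "Q = (\<phi> \<circ> g) ` {1/2..1}"
  have "arc_in Y (\<phi> \<circ> g)" using arc_in_homeomorphism[OF homeomorphism_symD[OF \<phi>] g(1)] .
  then have cont: "continuous_on {0..1} (\<phi> \<circ> g)" and inj: "inj_on (\<phi> \<circ> g) {0..1}"
    and "(\<phi> \<circ> g) ` {0..1} \<subseteq> Y"
    unfolding arc_in_def arc_def path_def path_image_def by auto
  then have QY: "Q \<subseteq> Y" by (auto simp: Q_def)
  have "connected Q"
    unfolding Q_def by (rule connected_continuous_image[OF continuous_on_subset[OF cont]]) auto
  moreover have "Q \<subseteq> cantor_fan_model" using QY YM by blast
  moreover have "(1/2, 0) \<notin> Q"
  proof
    assume "(1/2, 0) \<in> Q"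
    then obtain t where t: "t \<in> {1/2..1}" "\<phi> (g t) = (1/2, 0)" by (auto simp: Q_def)
    then have "g t \<in> X" using g(1) by (auto simp: arc_in_def path_image_def)
    then have "\<psi> (1/2, 0) = g t" using \<phi> t(2) by (metis homeomorphism_apply1)
    with t(1) g(2) show False by auto
  qed
  moreover have "(\<phi> \<circ> g) (1/2) \<in> Q" "(\<phi> \<circ> g) 1 \<in> Q" by (auto simp: Q_def)
  moreover have "(\<phi> \<circ> g) (1/2) \<noteq> (\<phi> \<circ> g) 1" using inj_onD[OF inj, of "1/2" 1] by auto
  ultimately obtain c \<alpha> \<beta> where "c \<in> cantor_set" "0 < \<alpha>" "\<alpha> < \<beta>" "\<beta> \<le> 1"
      "\<And>t. t \<in> {\<alpha>..\<beta>} \<Longrightarrow> fan_point c t \<in> Q"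
    by (rule connected_in_cantor_fan_model_contains_segment) blast
  then show thesis using that QY by blast
qed

theorem mainTheorem6:
  fixes L C :: "'a::metric_space set" and f :: "'a \<Rightarrow> 'a"
  assumes "lelek_fan L"
    and "C \<subseteq> L" and "continuum C" and "cantor_fan C"
    and "embedding_on L f" and "f ` L \<subseteq> C"
  shows "\<not> (\<exists>r. retraction L (f ` L) r)"
proof
  assume "\<exists>r. retraction L (f ` L) r"
  then obtain r where r: "retraction L (f ` L) r" by blast
  obtain h h' where h: "homeomorphism C cantor_fan_model h h'"
    using assms(4) unfolding cantor_fan_def homeomorphic_def by blast
  obtain f' where f: "homeomorphism L (f ` L) f f'"
    using assms(5) unfolding embedding_on_def by blast
  define Y where "Y = h ` f ` L"
  have \<phi>: "homeomorphism L Y (h \<circ> f) (f' \<circ> h')"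
    using homeomorphism_compose[OF f homeomorphism_of_subsets[OF h assms(6) order_refl refl]]
    by (simp add: Y_def)
  have \<rho>: "retraction cantor_fan_model Y (h \<circ> r \<circ> h')"
    unfolding Y_def using retraction_homeomorphism[OF h retraction_subset[OF r assms(6,2)]] .
  have dense: "Y \<subseteq> closure (end_points Y)"
    using homeomorphism_dense_end_points[OF \<phi>] assms(1) by (simp add: lelek_fan_def)
  obtain v where "ramification_point L v"
    using assms(1) by (auto simp: lelek_fan_def smooth_fan_def fan_top_def)
  moreover have "Y \<subseteq> cantor_fan_model" using \<rho> by (simp add: retraction_def)
  ultimately obtain c \<alpha> \<beta> where "c \<in> cantor_set" "0 < \<alpha>" "\<alpha> < \<beta>" "\<beta> \<le> 1"
      "\<And>t. t \<in> {\<alpha>..\<beta>} \<Longrightarrow> fan_point c t \<in> Y"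
    using homeomorphic_ramified_subset_contains_leg_segment[OF \<phi>] by blast
  then show False using cantor_fan_retract_no_leg_segment[OF \<rho> dense] by blast
qed

end
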